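(* Let $E$ and $D$ be open ellipsoids in $\mathbb{R}^n$, $n\ge2$ (sets of the form $\{x: {}^t(x-c)P(x-c)<1\}$ with $P$ positive definite), whose boundaries do not intersect transversally at any point, i.e. at every point of $\partial E\cap\partial D$ the normal vectors to $\partial E$ and $\partial D$ are linearly dependent. If $E\cap D\ne\emptyset$, then $E\subset D$ or $D\subset E$. *)

theory Defs
  imports "HOL-Analysis.Analysis"
begin

definition pos_def_matrix :: "real^'n^'n \<Rightarrow> bool" where
  "pos_def_matrix P \<longleftrightarrow> transpose P = P \<and> (\<forall>x. x \<noteq> 0 \<longrightarrow> x \<bullet> (P *v x) > 0)"

definition ellipsoid :: "real^'n^'n \<Rightarrow> real^'n \<Rightarrow> (real^'n) set" where
  "ellipsoid P c = {x. (x - c) \<bullet> (P *v (x - c)) < 1}"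

text \<open>Normal vector to the boundary of the ellipsoid at x: the gradient of
  the defining quadratic function (x - c)^t P (x - c), i.e. 2 P (x - c).\<close>
definition ellipsoid_normal :: "real^'n^'n \<Rightarrow> real^'n \<Rightarrow> real^'n \<Rightarrow> real^'n" where
  "ellipsoid_normal P c x = 2 *\<^sub>R (P *v (x - c))"

definition lin_dep2 :: "real^'n \<Rightarrow> real^'n \<Rightarrow> bool" where
  "lin_dep2 u v \<longleftrightarrow> (\<exists>a b. (a \<noteq> 0 \<or> b \<noteq> 0) \<and> a *\<^sub>R u + b *\<^sub>R v = 0)"

end

theory Submission
  imports Defs "HOL-Real_Asymp.Real_Asymp"
begin

text \<open>Suppose neither ellipsoid contains the other. Then the boundary S of E contains a point a
  outside the closure of D and a point b inside D, and since S is connected for n \<ge> 2 it also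
  contains a point p of the boundary of D. Write F and G for the quadratic functions defining E
  and D. Tangency at p, Q (p - d) = l P (p - c), makes the pencil form M = Q - l P measure the
  position of points y of S relative to D: G y - 1 = M (y - p). So M is positive at a - p and
  negative at b - p, and some convex combination w of the two is M-isotropic without lying in the
  kernel of M. As w points into E, the line through p in direction w meets S in a second point x,
  which then lies on the boundary of D as well. Tangency at x would put x - p, a multiple of w,
  into the kernel of M.\<close>

definition quad_form :: "real^'n^'n \<Rightarrow> real^'n \<Rightarrow> real" where
  "quad_form A x = x \<bullet> (A *v x)"

lemma quad_form_scaleR: "quad_form A (r *\<^sub>R x) = r\<^sup>2 * quad_form A x"
  by (simp add: quad_form_def matrix_vector_mult_scaleR power2_eq_square)

lemma continuous_on_quad_form [continuous_intros]:
  "continuous_on S f \<Longrightarrow> continuous_on S (\<lambda>x. quad_form A (f x))"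
  unfolding quad_form_def
  by (intro continuous_intros continuous_on_compose2[OF matrix_vector_mult_linear_continuous_on]) auto

lemma inner_matrix_vector_commute:
  fixes A :: "real^'n^'n"
  assumes "transpose A = A"
  shows "x \<bullet> (A *v y) = y \<bullet> (A *v x)"
proof -
  have "x \<bullet> (A *v y) = (x v* A) \<bullet> y"
    by (simp add: dot_lmul_matrix)
  also have "x v* A = A *v x"
    by (metis assms transpose_matrix_vector)
  finally show ?thesis by (simp add: inner_commute)
qed

lemma quad_form_add:
  assumes "transpose A = A"
  shows "quad_form A (x + y) = quad_form A x + 2 * (y \<bullet> (A *v x)) + quad_form A y"
  using inner_matrix_vector_commute[OF assms, of x y]
  by (simp add: quad_form_def matrix_vector_right_distrib inner_add_left inner_add_right)

lemma quad_form_line: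
  assumes "transpose A = A"
  shows "quad_form A (x + t *\<^sub>R v) =
    quad_form A x + 2 * t * (v \<bullet> (A *v x)) + t\<^sup>2 * quad_form A v"
  using quad_form_add[OF assms, of x "t *\<^sub>R v"] by (simp add: quad_form_scaleR)

lemma quad_form_line_chord:
  assumes "transpose A = A"
  shows "quad_form A (x + t *\<^sub>R v) =
    (1 - t) * quad_form A x + t * quad_form A (x + v) + t * (t - 1) * quad_form A v"
  using quad_form_line[OF assms, of x t v] quad_form_line[OF assms, of x 1 v]
  by (simp add: algebra_simps power2_eq_square)

lemma transpose_pencil:
  "transpose P = P \<Longrightarrow> transpose Q = Q \<Longrightarrow> transpose (Q - l *\<^sub>R P) = Q - l *\<^sub>R P"
  by (simp add: transpose_def vec_eq_iff)

lemma quad_form_pencil: "quad_form (Q - l *\<^sub>R P) w = quad_form Q w - l * quad_form P w"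
  by (simp add: quad_form_def matrix_vector_mult_diff_rdistrib inner_diff_right
      flip: scaleR_matrix_vector_assoc)

lemma exists_isotropic_combination_not_in_kernel:
  assumes M: "transpose M = M" and A: "quad_form M A > 0" and B: "quad_form M B < 0"
  shows "\<exists>\<theta>\<in>{0..1}. quad_form M ((1 - \<theta>) *\<^sub>R A + \<theta> *\<^sub>R B) = 0 \<and>
    M *v ((1 - \<theta>) *\<^sub>R A + \<theta> *\<^sub>R B) \<noteq> 0"
proof -
  define w where "w \<theta> = (1 - \<theta>) *\<^sub>R A + \<theta> *\<^sub>R B" for \<theta> :: real
  have "continuous_on {0..1} (\<lambda>\<theta>. quad_form M (w \<theta>))"
    unfolding w_def by (intro continuous_intros)
  then obtain \<theta> where \<theta>: "0 \<le> \<theta>" "\<theta> \<le> 1" "quad_form M (w \<theta>) = 0"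
    using IVT2'[of "\<lambda>\<theta>. quad_form M (w \<theta>)" 1 0 0] A B by (force simp: w_def)
  have "M *v w \<theta> \<noteq> 0"
  proof
    assume kernel: "M *v w \<theta> = 0"
    have "quad_form M ((1 - \<theta>) *\<^sub>R A) = quad_form M (w \<theta> + (- \<theta>) *\<^sub>R B)"
      by (simp add: w_def)
    also have "\<dots> = \<theta>\<^sup>2 * quad_form M B"
      using quad_form_line[OF M, of "w \<theta>" "- \<theta>" B] by (simp add: kernel quad_form_def)
    finally have "(1 - \<theta>)\<^sup>2 * quad_form M A = \<theta>\<^sup>2 * quad_form M B"
      by (simp add: quad_form_scaleR)
    moreover have "(1 - \<theta>)\<^sup>2 * quad_form M A \<ge> 0" "\<theta>\<^sup>2 * quad_form M B \<le> 0"
      using A B by (simp_all add: mult_nonneg_nonpos)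
    ultimately have "(1 - \<theta>)\<^sup>2 * quad_form M A = 0" "\<theta>\<^sup>2 * quad_form M B = 0" by simp_all
    then show False using A B by simp
  qed
  with \<theta> show ?thesis by (auto simp: w_def)
qed

lemma pos_def_matrix_symmetric: "pos_def_matrix A \<Longrightarrow> transpose A = A"
  by (simp add: pos_def_matrix_def)

lemma pos_def_matrix_quad_form_pos: "pos_def_matrix A \<Longrightarrow> x \<noteq> 0 \<Longrightarrow> 0 < quad_form A x"
  by (simp add: pos_def_matrix_def quad_form_def)

lemma pos_def_matrix_quad_form_nonneg: "pos_def_matrix A \<Longrightarrow> 0 \<le> quad_form A x"
  by (cases "x = 0") (auto simp: quad_form_def dest: pos_def_matrix_quad_form_pos)

lemma ellipsoid_eq: "ellipsoid A c = {x. quad_form A (x - c) < 1}"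
  by (simp add: ellipsoid_def quad_form_def)

lemma mem_ellipsoid: "x \<in> ellipsoid A c \<longleftrightarrow> quad_form A (x - c) < 1"
  by (simp add: ellipsoid_eq)

lemma frontier_ellipsoid: "frontier (ellipsoid A c) = {x. quad_form A (x - c) = 1}"
proof -
  have "open (ellipsoid A c)" "closed {x. quad_form A (x - c) \<le> 1}"
    unfolding ellipsoid_eq by (auto intro!: open_Collect_less closed_Collect_le continuous_intros)
  then have frontier: "frontier (ellipsoid A c) = closure (ellipsoid A c) - ellipsoid A c"
    by (simp add: frontier_def interior_open)
  have "closure (ellipsoid A c) \<subseteq> {x. quad_form A (x - c) \<le> 1}"
    using \<open>closed _\<close> by (intro closure_minimal) (auto simp: mem_ellipsoid)
  moreover have "x \<in> closure (ellipsoid A c)" if "quad_form A (x - c) = 1" for x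
  proof -
    have "c \<noteq> x" using that by (auto simp: quad_form_def)
    have "open_segment c x \<subseteq> ellipsoid A c"
    proof
      fix y assume "y \<in> open_segment c x"
      then obtain u :: real where "0 < u" "u < 1" "y - c = u *\<^sub>R (x - c)"
        by (auto simp: in_segment algebra_simps)
      then show "y \<in> ellipsoid A c"
        using that by (simp add: mem_ellipsoid quad_form_scaleR power_less_one_iff)
    qed
    moreover have "x \<in> closure (open_segment c x)"
      using \<open>c \<noteq> x\<close> by (simp add: closure_open_segment)
    ultimately show ?thesis using closure_mono by blast
  qed
  ultimately show ?thesis
    unfolding frontier by (auto simp: mem_ellipsoid)
qed

lemma lin_dep2_imp_scaleR:
  assumes "lin_dep2 u v" "u \<noteq> 0"
  shows "\<exists>\<mu>. v = \<mu> *\<^sub>R u"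
proof -
  obtain a b where "a \<noteq> 0 \<or> b \<noteq> 0" and ab: "a *\<^sub>R u + b *\<^sub>R v = 0"
    using assms(1) by (auto simp: lin_dep2_def)
  with \<open>u \<noteq> 0\<close> have "b \<noteq> 0" by auto
  from ab have "b *\<^sub>R v = (- a) *\<^sub>R u" by (simp add: add_eq_0_iff)
  then have "(1 / b) *\<^sub>R (b *\<^sub>R v) = (1 / b) *\<^sub>R ((- a) *\<^sub>R u)" by simp
  with \<open>b \<noteq> 0\<close> have "v = (- a / b) *\<^sub>R u" by simp
  then show ?thesis ..
qed

lemma ellipsoid_normals_parallel:
  assumes "quad_form P (x - c) = 1"
    and "lin_dep2 (ellipsoid_normal P c x) (ellipsoid_normal Q d x)"
  shows "\<exists>\<mu>. Q *v (x - d) = \<mu> *\<^sub>R (P *v (x - c))"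
proof -
  have "ellipsoid_normal P c x \<noteq> 0"
    using assms(1) by (auto simp: quad_form_def ellipsoid_normal_def)
  then obtain \<mu> where "ellipsoid_normal Q d x = \<mu> *\<^sub>R ellipsoid_normal P c x"
    using lin_dep2_imp_scaleR[OF assms(2)] by blast
  then have "2 *\<^sub>R (Q *v (x - d)) = 2 *\<^sub>R (\<mu> *\<^sub>R (P *v (x - c)))"
    by (simp add: ellipsoid_normal_def mult.commute)
  then have "Q *v (x - d) = \<mu> *\<^sub>R (P *v (x - c))"
    by (simp del: scaleR_scaleR)
  then show ?thesis ..
qed

lemma ellipsoid_sphere_chord:
  assumes "transpose A = A" "quad_form A (x - c) = 1" "quad_form A (y - c) = 1"
  shows "2 * ((x - y) \<bullet> (A *v (x - c))) = quad_form A (x - y)"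
  using quad_form_line[OF assms(1), of "x - c" "-1" "x - y"] assms(2,3) by simp

lemma ellipsoid_sphere_second_point:
  assumes "pos_def_matrix A" "quad_form A (p - c) = 1" "w \<bullet> (A *v (p - c)) < 0"
  shows "\<exists>s>0. quad_form A (p + s *\<^sub>R w - c) = 1"
proof -
  have "w \<noteq> 0" using assms(3) by auto
  then have q: "quad_form A w > 0" by (rule pos_def_matrix_quad_form_pos[OF assms(1)])
  define s where "s = - 2 * (w \<bullet> (A *v (p - c))) / quad_form A w"
  have "s > 0" unfolding s_def using assms(3) q by (intro divide_pos_pos) auto
  have s: "s * quad_form A w = - 2 * (w \<bullet> (A *v (p - c)))"
    unfolding s_def using q by simp
  have "p + s *\<^sub>R w - c = (p - c) + s *\<^sub>R w" by simp
  then have "quad_form A (p + s *\<^sub>R w - c) =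
      1 + s * (2 * (w \<bullet> (A *v (p - c))) + s * quad_form A w)"
    using quad_form_line[OF pos_def_matrix_symmetric[OF assms(1)], of "p - c" s w] assms(2)
    by (simp add: power2_eq_square algebra_simps)
  also have "\<dots> = 1" by (simp add: s)
  finally show ?thesis using \<open>s > 0\<close> by blast
qed

lemma ray_leaves_ellipsoid:
  assumes "pos_def_matrix A" "x \<in> ellipsoid A c" "v \<noteq> 0"
  shows "\<exists>t>0. quad_form A (x + t *\<^sub>R v - c) = 1"
proof -
  define f where
    "f t = quad_form A (x - c) + 2 * t * (v \<bullet> (A *v (x - c))) + t\<^sup>2 * quad_form A v" for t
  have f: "quad_form A (x + t *\<^sub>R v - c) = f t" for t
    using quad_form_line[OF pos_def_matrix_symmetric[OF assms(1)], of "x - c" t v]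
    by (simp add: f_def algebra_simps)
  have "quad_form A v > 0" by (rule pos_def_matrix_quad_form_pos[OF assms(1,3)])
  then have "filterlim f at_top at_top" unfolding f_def by real_asymp
  then have "\<forall>\<^sub>F t in at_top. 1 \<le> f t" by (simp add: filterlim_at_top)
  then obtain N where N: "\<forall>t\<ge>N. 1 \<le> f t" by (auto simp: eventually_at_top_linorder)
  define T where "T = max N 0"
  have "0 \<le> T" "1 \<le> f T" using N by (auto simp: T_def)
  moreover have "f 0 < 1" using assms(2) by (simp add: f_def mem_ellipsoid)
  moreover have "continuous_on {0..T} f" unfolding f_def by (intro continuous_intros)
  ultimately obtain t where "0 \<le> t" "f t = 1"
    using IVT'[of f 0 1 T] by auto
  moreover from \<open>f 0 < 1\<close> \<open>f t = 1\<close> have "t \<noteq> 0" by auto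
  ultimately have "t > 0 \<and> quad_form A (x + t *\<^sub>R v - c) = 1" using f by auto
  then show ?thesis by blast
qed

lemma exists_frontier_point_outside:
  assumes P: "pos_def_matrix P" and Q: "pos_def_matrix Q"
    and z: "z \<in> ellipsoid P c \<inter> ellipsoid Q d" and e: "e \<in> ellipsoid P c - ellipsoid Q d"
  shows "\<exists>a. quad_form P (a - c) = 1 \<and> quad_form Q (a - d) > 1"
proof -
  define v where "v = e - z"
  have "v \<noteq> 0" using z e by (auto simp: v_def)
  then obtain t where "t > 0" and a: "quad_form P (e + t *\<^sub>R v - c) = 1"
    using ray_leaves_ellipsoid[OF P] e by blast
  have "e + t *\<^sub>R v - d = (z - d) + (1 + t) *\<^sub>R v"
    by (simp add: v_def algebra_simps)
  then have "quad_form Q (e + t *\<^sub>R v - d) \<ge>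
      quad_form Q (e - d) + t * (quad_form Q (e - d) - quad_form Q (z - d))"
    using quad_form_line_chord[OF pos_def_matrix_symmetric[OF Q], of "z - d" "1 + t" v]
      pos_def_matrix_quad_form_nonneg[OF Q, of v] \<open>t > 0\<close>
    by (simp add: v_def algebra_simps)
  moreover have "quad_form Q (z - d) < 1" "quad_form Q (e - d) \<ge> 1"
    using z e by (auto simp: mem_ellipsoid)
  moreover from this have "t * (quad_form Q (e - d) - quad_form Q (z - d)) > 0"
    using \<open>t > 0\<close> by simp
  ultimately have "quad_form Q (e + t *\<^sub>R v - d) > 1" by linarith
  with a show ?thesis by blast
qed

lemma exists_frontier_point_inside:
  assumes P: "pos_def_matrix P" and Q: "pos_def_matrix Q"
    and z: "z \<in> ellipsoid P c \<inter> ellipsoid Q d" and e: "e \<in> ellipsoid Q d - ellipsoid P c"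
  shows "\<exists>b. quad_form P (b - c) = 1 \<and> quad_form Q (b - d) < 1"
proof -
  define v where "v = e - z"
  define f where "f t = quad_form P (z - c + t *\<^sub>R v)" for t
  have "f 0 \<le> 1" "1 \<le> f 1" "continuous_on {0..1} f"
    using z e by (auto simp: f_def v_def mem_ellipsoid intro!: continuous_intros)
  then obtain t where t: "0 \<le> t" "t \<le> 1" "f t = 1"
    using IVT'[of f 0 1 1] by force
  have "t * (t - 1) * quad_form Q v \<le> 0"
    using t pos_def_matrix_quad_form_nonneg[OF Q, of v]
    by (intro mult_nonpos_nonneg mult_nonneg_nonpos) auto
  then have "quad_form Q (z - d + t *\<^sub>R v) \<le>
      (1 - t) * quad_form Q (z - d) + t * quad_form Q (e - d)"
    using quad_form_line_chord[OF pos_def_matrix_symmetric[OF Q], of "z - d" t v]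
    by (simp add: v_def)
  also have "\<dots> < 1"
    using z e t by (auto simp: mem_ellipsoid convex_bound_lt)
  finally have "quad_form Q (z + t *\<^sub>R v - d) < 1"
    by (simp add: algebra_simps)
  moreover have "quad_form P (z + t *\<^sub>R v - c) = 1"
    using t(3) by (simp add: f_def algebra_simps)
  ultimately show ?thesis by blast
qed

lemma ellipsoid_sphere_eq_image_sphere:
  assumes "pos_def_matrix A"
  shows "{x. quad_form A (x - c) = 1} = (\<lambda>u. c + (1 / sqrt (quad_form A u)) *\<^sub>R u) ` sphere 0 1"
proof (intro equalityI subsetI)
  fix x assume "x \<in> {x. quad_form A (x - c) = 1}"
  then have x: "quad_form A (x - c) = 1" by simp
  then have "x \<noteq> c" by (auto simp: quad_form_def)
  define u where "u = (1 / norm (x - c)) *\<^sub>R (x - c)"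
  have "quad_form A u = (1 / norm (x - c))\<^sup>2" by (simp add: u_def quad_form_scaleR x)
  then have "c + (1 / sqrt (quad_form A u)) *\<^sub>R u = x"
    using \<open>x \<noteq> c\<close> by (simp add: u_def)
  moreover have "u \<in> sphere 0 1" using \<open>x \<noteq> c\<close> by (simp add: u_def)
  ultimately show "x \<in> (\<lambda>u. c + (1 / sqrt (quad_form A u)) *\<^sub>R u) ` sphere 0 1" by blast
next
  fix x assume "x \<in> (\<lambda>u. c + (1 / sqrt (quad_form A u)) *\<^sub>R u) ` sphere 0 1"
  then obtain u where "norm u = 1" and x: "x = c + (1 / sqrt (quad_form A u)) *\<^sub>R u" by auto
  then have "quad_form A u > 0" by (intro pos_def_matrix_quad_form_pos[OF assms]) auto
  then show "x \<in> {x. quad_form A (x - c) = 1}"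
    by (simp add: x quad_form_scaleR power_divide)
qed

lemma connected_ellipsoid_sphere:
  fixes A :: "real^'n^'n"
  assumes "CARD('n) \<ge> 2" "pos_def_matrix A"
  shows "connected {x. quad_form A (x - c) = 1}"
proof -
  have "sqrt (quad_form A u) \<noteq> 0" if "u \<in> sphere 0 1" for u
  proof -
    have "u \<noteq> 0" using that by auto
    then show ?thesis using pos_def_matrix_quad_form_pos[OF assms(2), of u] by simp
  qed
  then have "continuous_on (sphere 0 1) (\<lambda>u. c + (1 / sqrt (quad_form A u)) *\<^sub>R u)"
    by (intro continuous_intros) auto
  moreover have "connected (sphere (0 :: real^'n) 1)"
    using assms(1) by (simp add: connected_sphere)
  ultimately show ?thesis
    unfolding ellipsoid_sphere_eq_image_sphere[OF assms(2)] by (rule connected_continuous_image)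
qed

lemma exists_common_sphere_point:
  fixes P Q :: "real^'n^'n"
  assumes "CARD('n) \<ge> 2" "pos_def_matrix P"
    and "quad_form P (a - c) = 1" "quad_form Q (a - d) \<ge> 1"
    and "quad_form P (b - c) = 1" "quad_form Q (b - d) \<le> 1"
  shows "\<exists>p. quad_form P (p - c) = 1 \<and> quad_form Q (p - d) = 1"
proof -
  let ?S = "{x. quad_form P (x - c) = 1}"
  have "connected ((\<lambda>x. quad_form Q (x - d)) ` ?S)"
    using connected_ellipsoid_sphere[OF assms(1,2)]
    by (intro connected_continuous_image continuous_intros)
  then have "1 \<in> (\<lambda>x. quad_form Q (x - d)) ` ?S"
    by (rule connectedD_interval) (use assms(3-6) in auto)
  then show ?thesis by auto
qed

lemma quad_form_pencil_at_tangency: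
  assumes P: "transpose P = P" and Q: "transpose Q = Q"
    and "quad_form P (p - c) = 1" "quad_form Q (p - d) = 1"
    and tangent: "Q *v (p - d) = l *\<^sub>R (P *v (p - c))"
  shows "quad_form Q (y - d) - 1 =
    l * (quad_form P (y - c) - 1) + quad_form (Q - l *\<^sub>R P) (y - p)"
proof -
  define \<beta> where "\<beta> = (y - p) \<bullet> (P *v (p - c))"
  have F: "quad_form P (y - c) = 1 + 2 * \<beta> + quad_form P (y - p)"
    using quad_form_add[OF P, of "p - c" "y - p"] assms(3) by (simp add: \<beta>_def)
  have G: "quad_form Q (y - d) = 1 + 2 * l * \<beta> + quad_form Q (y - p)"
    using quad_form_add[OF Q, of "p - d" "y - p"] assms(4) by (simp add: \<beta>_def tangent)
  show ?thesis by (simp add: F G quad_form_pencil algebra_simps)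
qed

lemma pencil_kernel_if_tangent_twice:
  assumes P: "pos_def_matrix P"
    and "quad_form P (x - c) = 1" "quad_form P (p - c) = 1" "x \<noteq> p"
    and tangent_p: "Q *v (p - d) = l *\<^sub>R (P *v (p - c))"
    and tangent_x: "Q *v (x - d) = \<mu> *\<^sub>R (P *v (x - c))"
    and isotropic: "quad_form (Q - l *\<^sub>R P) (x - p) = 0"
  shows "(Q - l *\<^sub>R P) *v (x - p) = 0"
proof -
  have "(Q - l *\<^sub>R P) *v (x - p) =
      (Q *v (x - d) - Q *v (p - d)) - l *\<^sub>R (P *v (x - c) - P *v (p - c))"
    by (simp add: matrix_vector_mult_diff_rdistrib matrix_vector_mult_diff_distrib
        scaleR_matrix_vector_assoc[symmetric] algebra_simps)
  also have "\<dots> = (\<mu> - l) *\<^sub>R (P *v (x - c))"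
    unfolding tangent_p tangent_x by (simp add: algebra_simps)
  finally have Mx: "(Q - l *\<^sub>R P) *v (x - p) = (\<mu> - l) *\<^sub>R (P *v (x - c))" .
  have "2 * ((x - p) \<bullet> (P *v (x - c))) = quad_form P (x - p)"
    using ellipsoid_sphere_chord[OF pos_def_matrix_symmetric[OF P] assms(2,3)] .
  moreover have "quad_form P (x - p) > 0"
    using pos_def_matrix_quad_form_pos[OF P] \<open>x \<noteq> p\<close> by simp
  moreover have "(\<mu> - l) * ((x - p) \<bullet> (P *v (x - c))) = 0"
    using isotropic by (simp add: quad_form_def Mx)
  ultimately have "\<mu> = l" by simp
  then show ?thesis by (simp add: Mx)
qed

lemma exists_transversal_common_point:
  assumes P: "pos_def_matrix P" and Q: "transpose Q = Q"
    and p: "quad_form P (p - c) = 1" "quad_form Q (p - d) = 1"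
    and tangent: "Q *v (p - d) = l *\<^sub>R (P *v (p - c))"
    and a: "quad_form P (a - c) = 1" "quad_form Q (a - d) > 1"
    and b: "quad_form P (b - c) = 1" "quad_form Q (b - d) < 1"
  shows "\<exists>x. quad_form P (x - c) = 1 \<and> quad_form Q (x - d) = 1 \<and>
    (\<forall>\<mu>. Q *v (x - d) \<noteq> \<mu> *\<^sub>R (P *v (x - c)))"
proof -
  let ?M = "Q - l *\<^sub>R P"
  note pencil = quad_form_pencil_at_tangency[OF pos_def_matrix_symmetric[OF P] Q p tangent]
  have inward: "(y - p) \<bullet> (P *v (p - c)) < 0" if "quad_form P (y - c) = 1" "y \<noteq> p" for y
  proof -
    have "2 * ((p - y) \<bullet> (P *v (p - c))) = quad_form P (p - y)"
      by (rule ellipsoid_sphere_chord[OF pos_def_matrix_symmetric[OF P] p(1) that(1)])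
    moreover have "quad_form P (p - y) > 0"
      using pos_def_matrix_quad_form_pos[OF P] that(2) by simp
    ultimately show ?thesis by (simp add: inner_diff_left)
  qed
  have "quad_form ?M (a - p) > 0" "quad_form ?M (b - p) < 0"
    using pencil[of a] pencil[of b] a b by simp_all
  then obtain \<theta> :: real where "\<theta> \<in> {0..1}"
    and isotropic: "quad_form ?M ((1 - \<theta>) *\<^sub>R (a - p) + \<theta> *\<^sub>R (b - p)) = 0"
    and not_kernel: "?M *v ((1 - \<theta>) *\<^sub>R (a - p) + \<theta> *\<^sub>R (b - p)) \<noteq> 0"
    using exists_isotropic_combination_not_in_kernel
      transpose_pencil[OF pos_def_matrix_symmetric[OF P] Q] by blast
  define w where "w = (1 - \<theta>) *\<^sub>R (a - p) + \<theta> *\<^sub>R (b - p)"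
  have "a \<noteq> p" "b \<noteq> p" using a b p by auto
  then have "w \<bullet> (P *v (p - c)) < 0"
    using inward[OF a(1)] inward[OF b(1)] \<open>\<theta> \<in> {0..1}\<close>
    by (auto simp: w_def inner_add_left intro!: convex_bound_lt)
  then obtain s where "s > 0" and Fx: "quad_form P (p + s *\<^sub>R w - c) = 1"
    using ellipsoid_sphere_second_point[OF P p(1)] by blast
  define x where "x = p + s *\<^sub>R w"
  have x_p: "x - p = s *\<^sub>R w" by (simp add: x_def)
  have isotropic_x: "quad_form ?M (x - p) = 0"
    using isotropic by (simp add: x_p quad_form_scaleR w_def)
  then have Gx: "quad_form Q (x - d) = 1"
    using pencil[of x] Fx by (simp add: x_def)
  have "Q *v (x - d) \<noteq> \<mu> *\<^sub>R (P *v (x - c))" for \<mu>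
  proof
    assume tangent_x: "Q *v (x - d) = \<mu> *\<^sub>R (P *v (x - c))"
    have "w \<noteq> 0" using not_kernel by (auto simp: w_def)
    then have "x \<noteq> p" using \<open>s > 0\<close> x_p by auto
    then have "?M *v (x - p) = 0"
      using pencil_kernel_if_tangent_twice[OF P _ p(1) _ tangent tangent_x isotropic_x] Fx
      by (simp add: x_def)
    then show False
      using not_kernel \<open>s > 0\<close> by (simp add: x_p w_def matrix_vector_mult_scaleR)
  qed
  with Fx Gx show ?thesis unfolding x_def by blast
qed

theorem proposition2p4:
  fixes P Q :: "real^'n^'n" and c d :: "real^'n"
  assumes "CARD('n) \<ge> 2"
    and "pos_def_matrix P" and "pos_def_matrix Q"
    and "\<forall>x \<in> frontier (ellipsoid P c) \<inter> frontier (ellipsoid Q d).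
           lin_dep2 (ellipsoid_normal P c x) (ellipsoid_normal Q d x)"
    and "ellipsoid P c \<inter> ellipsoid Q d \<noteq> {}"
  shows "ellipsoid P c \<subseteq> ellipsoid Q d \<or> ellipsoid Q d \<subseteq> ellipsoid P c"
proof (rule ccontr)
  note P = assms(2) and Q = assms(3)
  assume "\<not> (ellipsoid P c \<subseteq> ellipsoid Q d \<or> ellipsoid Q d \<subseteq> ellipsoid P c)"
  then obtain e e' where "e \<in> ellipsoid P c - ellipsoid Q d" "e' \<in> ellipsoid Q d - ellipsoid P c"
    by blast
  moreover obtain z where "z \<in> ellipsoid P c \<inter> ellipsoid Q d" using assms(5) by blast
  ultimately obtain a b
    where a: "quad_form P (a - c) = 1" "quad_form Q (a - d) > 1"
      and b: "quad_form P (b - c) = 1" "quad_form Q (b - d) < 1"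
    using exists_frontier_point_outside[OF P Q] exists_frontier_point_inside[OF P Q] by metis
  then obtain p where p: "quad_form P (p - c) = 1" "quad_form Q (p - d) = 1"
    using exists_common_sphere_point[OF assms(1) P a(1) _ b(1)] a(2) b(2) by force
  have tangent: "\<exists>\<mu>. Q *v (x - d) = \<mu> *\<^sub>R (P *v (x - c))"
    if "quad_form P (x - c) = 1" "quad_form Q (x - d) = 1" for x
  proof (rule ellipsoid_normals_parallel[OF that(1)])
    show "lin_dep2 (ellipsoid_normal P c x) (ellipsoid_normal Q d x)"
      using that assms(4) by (simp add: frontier_ellipsoid)
  qed
  then obtain l where "Q *v (p - d) = l *\<^sub>R (P *v (p - c))" using p by blast
  then show False
    using exists_transversal_common_point[OF P pos_def_matrix_symmetric[OF Q] p _ a b] tangent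
    by blast
qed

end
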